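(* Consider an instance of $k$-robust Steiner forest on an undirected graph $G=(V,E)$ with edge costs $c$ and pair set $U\subseteq V\times V$, a threshold $T\ge0$, and constants $\beta,\gamma>0$ with $\gamma\le\beta/2$. Run the following procedure: start with $S_r=S_f=W=\emptyset$; while there is a pair $(s,t)\in U$ with $d_{G/(S_r\cup S_f)}(s,t)>\beta\frac{T}{k}$, add $(s,t)$ to $S_r$; then, if $d_G(s,w)<\gamma\frac{T}{k}$ for some $w\in W$, add $(s,w)$ to $S_f$ for such a $w$, else add $s$ to $W$; then, if $d_G(t,w')<\gamma\frac Tk$ for some $w'\in W$, add $(t,w')$ to $S_f$ for such a $w'$, else add $t$ to $W$. At termination, $|W|\ge|S_r|\ge|S_f|$.
   Context: $d_G$ is the shortest-path distance in $G$ under edge costs $c$. For a set of vertex pairs $S$, $G/S$ is the graph obtained by identifying the two vertices of each pair in $S$, and $d_{G/S}$ is its shortest-path distance. *)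

theory Defs
  imports "HOL-Library.Extended_Real"
begin

text \<open>The contraction G/S (identifying both vertices of each pair in S) is modelled by allowing
  zero-cost steps between the two vertices of any pair in S.\<close>

definition step_cost :: "'a set set \<Rightarrow> ('a set \<Rightarrow> real) \<Rightarrow> ('a \<times> 'a) set \<Rightarrow> 'a \<Rightarrow> 'a \<Rightarrow> ereal" where
  "step_cost E c S x y =
     (if (x, y) \<in> S \<or> (y, x) \<in> S then 0
      else if {x, y} \<in> E then ereal (c {x, y}) else \<infinity>)"

fun walk_cost :: "'a set set \<Rightarrow> ('a set \<Rightarrow> real) \<Rightarrow> ('a \<times> 'a) set \<Rightarrow> 'a list \<Rightarrow> ereal" where
  "walk_cost E c S [] = 0"
| "walk_cost E c S [x] = 0"
| "walk_cost E c S (x # y # xs) = step_cost E c S x y + walk_cost E c S (y # xs)"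

text \<open>Shortest-path distance d_{G/S}(u,v); infinite if no path. d_G = contr_dist E c {}.\<close>
definition contr_dist :: "'a set set \<Rightarrow> ('a set \<Rightarrow> real) \<Rightarrow> ('a \<times> 'a) set \<Rightarrow> 'a \<Rightarrow> 'a \<Rightarrow> ereal" where
  "contr_dist E c S u v = Inf {walk_cost E c S xs | xs. xs \<noteq> [] \<and> hd xs = u \<and> last xs = v}"

definition handle_terminal ::
  "'a set set \<Rightarrow> ('a set \<Rightarrow> real) \<Rightarrow> real \<Rightarrow> 'a \<Rightarrow>
   ('a \<times> 'a) set \<times> 'a set \<Rightarrow> ('a \<times> 'a) set \<times> 'a set \<Rightarrow> bool" where
  "handle_terminal E c r x st st' =
     (case st of (Sf, W) \<Rightarrow>
       (\<exists>w\<in>W. contr_dist E c {} x w < ereal r \<and> st' = (insert (x, w) Sf, W))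
       \<or> ((\<not> (\<exists>w\<in>W. contr_dist E c {} x w < ereal r)) \<and> st' = (Sf, insert x W)))"

text \<open>One iteration of the while loop; states are (S_r, S_f, W).
  Parameters: rho = beta*T/k (loop threshold), r = gamma*T/k.\<close>
definition loop_step ::
  "'a set set \<Rightarrow> ('a set \<Rightarrow> real) \<Rightarrow> ('a \<times> 'a) set \<Rightarrow> real \<Rightarrow> real \<Rightarrow>
   ('a \<times> 'a) set \<times> ('a \<times> 'a) set \<times> 'a set \<Rightarrow>
   ('a \<times> 'a) set \<times> ('a \<times> 'a) set \<times> 'a set \<Rightarrow> bool" where
  "loop_step E c U rho r st st' =
     (case st of (Sr, Sf, W) \<Rightarrow>
       (\<exists>s t Sf1 W1 Sf2 W2. (s, t) \<in> U \<and> contr_dist E c (Sr \<union> Sf) s t > ereal rho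
          \<and> handle_terminal E c r s (Sf, W) (Sf1, W1)
          \<and> handle_terminal E c r t (Sf1, W1) (Sf2, W2)
          \<and> st' = (insert (s, t) Sr, Sf2, W2)))"

definition loop_terminated ::
  "'a set set \<Rightarrow> ('a set \<Rightarrow> real) \<Rightarrow> ('a \<times> 'a) set \<Rightarrow> real \<Rightarrow>
   ('a \<times> 'a) set \<times> ('a \<times> 'a) set \<times> 'a set \<Rightarrow> bool" where
  "loop_terminated E c U rho st =
     (case st of (Sr, Sf, W) \<Rightarrow> \<not> (\<exists>(s, t)\<in>U. contr_dist E c (Sr \<union> Sf) s t > ereal rho))"

end

theory Submission
  imports Defs
begin

text \<open>Let \<open>K\<close> be the number of connected components of the graph with edge set
  \<open>S\<^sub>r \<union> S\<^sub>f\<close> that meet \<open>W\<close>. Every iteration preserves \<open>|S\<^sub>r| + K \<le> |W|\<close> and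
  \<open>|S\<^sub>f| + K \<le> |S\<^sub>r|\<close>. Call the vertex of \<open>W\<close> that a terminal is paired with its partner, a
  terminal already lying in \<open>W\<close> being its own partner. The pair \<open>(s, t)\<close> is more than
  \<open>\<beta>T/k\<close> apart in the contracted graph while partners lie within \<open>\<gamma>T/k \<le> \<beta>T/(2k)\<close> of their
  terminal, so partners of \<open>s\<close> and of \<open>t\<close> lie in distinct components. The new edges join
  all touched components into one, so with \<open>m\<close> partners, \<open>|S\<^sub>r|\<close> grows by \<open>1\<close>, \<open>|S\<^sub>f|\<close> by at
  most \<open>m\<close>, \<open>|W|\<close> by \<open>2 - m\<close>, and \<open>K\<close> by at most \<open>1 - m\<close>.\<close>

section \<open>Components\<close>

abbreviation linked :: "('a \<times> 'a) set \<Rightarrow> 'a \<Rightarrow> 'a \<Rightarrow> bool" where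
  "linked H \<equiv> equivclp (\<lambda>x y. (x, y) \<in> H)"

definition component :: "('a \<times> 'a) set \<Rightarrow> 'a \<Rightarrow> 'a set" where
  "component H x = {y. linked H x y}"

lemma linked_mono:
  assumes "H \<subseteq> H'" and "linked H x y"
  shows "linked H' x y"
  using assms(2)
  by (induction rule: equivclp_induct) (use assms(1) in \<open>auto intro: equivclp_into_equivclp\<close>)

lemma component_eq_iff: "component H x = component H y \<longleftrightarrow> linked H x y"
proof
  assume "component H x = component H y"
  then show "linked H x y"
    using equivclp_refl[of _ y] unfolding component_def by blast
next
  assume "linked H x y"
  then show "component H x = component H y"
    unfolding component_def by (blast intro: equivclp_trans equivclp_sym)
qed

lemma component_eq_if_not_linked:
  assumes sub: "H \<subseteq> H'" and new: "\<forall>(a, b) \<in> H' - H. linked H' a s"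
    and far: "\<not> linked H' x s"
  shows "component H' x = component H x"
proof -
  have "linked H x y" if "linked H' x y" for y
    using that
  proof (induction rule: equivclp_induct)
    case (step y z)
    have "(y, z) \<in> H \<or> (z, y) \<in> H"
    proof (rule ccontr)
      assume "\<not> ?thesis"
      with step.hyps(2) new have "linked H' y s \<or> linked H' z s" by blast
      with step.hyps(2) have "linked H' y s"
        by (blast intro: equivclp_trans)
      with step.hyps(1) far show False by (blast intro: equivclp_trans)
    qed
    with step.IH show ?case by (rule equivclp_into_equivclp)
  qed simp
  then show ?thesis
    unfolding component_def using linked_mono[OF sub] by blast
qed

lemma card_components_merge:
  assumes sub: "H \<subseteq> H'" and new: "\<forall>(a, b) \<in> H' - H. linked H' a s"
    and "W \<subseteq> W'" and new_W: "\<forall>x \<in> W' - W. linked H' x s" and "finite W'"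
    and "P \<subseteq> W" and P_s: "\<forall>x \<in> P. linked H' x s"
  shows "card (component H' ` W') + card (component H ` P) \<le> card (component H ` W) + 1"
proof -
  define A where "A = {x \<in> W. linked H' x s}"
  have "finite W" using \<open>W \<subseteq> W'\<close> \<open>finite W'\<close> by (rule finite_subset)
  have "component H' ` W' \<subseteq> insert (component H' s) (component H ` (W - A))"
  proof
    fix X assume "X \<in> component H' ` W'"
    then obtain x where "x \<in> W'" "X = component H' x" by blast
    then show "X \<in> insert (component H' s) (component H ` (W - A))"
      using new_W component_eq_if_not_linked[OF sub new, of x] component_eq_iff[of H' x s]
      unfolding A_def by blast
  qed
  then have "card (component H' ` W') \<le> card (insert (component H' s) (component H ` (W - A)))"
    using \<open>finite W\<close> by (intro card_mono) auto
  also have "\<dots> \<le> card (component H ` (W - A)) + 1"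
    by (simp add: card_insert_le_m1)
  finally have W'_bound: "card (component H' ` W') \<le> card (component H ` (W - A)) + 1" .
  have "component H ` (W - A) \<inter> component H ` A = {}"
  proof (rule ccontr)
    assume "component H ` (W - A) \<inter> component H ` A \<noteq> {}"
    then obtain x y where "x \<in> W - A" "y \<in> A" "linked H x y"
      using component_eq_iff[of H] by blast
    then have "linked H' x s"
      unfolding A_def using linked_mono[OF sub] by (blast intro: equivclp_trans)
    with \<open>x \<in> W - A\<close> show False unfolding A_def by blast
  qed
  moreover have "component H ` W = component H ` (W - A) \<union> component H ` A"
    unfolding A_def by blast
  ultimately have W_split:
    "card (component H ` W) = card (component H ` (W - A)) + card (component H ` A)"
    using \<open>finite W\<close> by (simp add: card_Un_disjoint A_def)
  have "card (component H ` P) \<le> card (component H ` A)"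
    using \<open>finite W\<close> \<open>P \<subseteq> W\<close> P_s unfolding A_def by (intro card_mono) auto
  with W'_bound W_split show ?thesis by linarith
qed

section \<open>Walks and contracted distances\<close>

lemma walk_cost_nonneg:
  assumes "\<forall>e\<in>E. c e \<ge> 0"
  shows "walk_cost E c S xs \<ge> 0"
  using assms by (induction E c S xs rule: walk_cost.induct) (auto simp: step_cost_def)

lemma step_cost_antimono:
  assumes "\<forall>e\<in>E. c e \<ge> 0" and "S \<subseteq> S'"
  shows "step_cost E c S' x y \<le> step_cost E c S x y"
  using assms by (auto simp: step_cost_def)

lemma walk_cost_antimono:
  assumes "\<forall>e\<in>E. c e \<ge> 0" and "S \<subseteq> S'"
  shows "walk_cost E c S' xs \<le> walk_cost E c S xs"
  using assms
  by (induction E c S' xs rule: walk_cost.induct) (auto intro!: add_mono step_cost_antimono)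

lemma walk_cost_append:
  "walk_cost E c S (xs @ y # ys) = walk_cost E c S (xs @ [y]) + walk_cost E c S (y # ys)"
proof (induction xs)
  case (Cons x xs)
  then show ?case
    by (cases xs) (simp_all add: add.assoc)
qed simp

lemma walk_cost_rev: "walk_cost E c S (rev xs) = walk_cost E c S xs"
proof (induction E c S xs rule: walk_cost.induct)
  case (3 E c S x y xs)
  have "step_cost E c S y x = step_cost E c S x y"
    by (auto simp: step_cost_def insert_commute)
  with 3 show ?case
    using walk_cost_append[of E c S "rev xs" y "[x]"] by (simp add: add.commute)
qed simp_all

lemma walk_cost_concat:
  assumes "xs \<noteq> []" and "ys \<noteq> []" and "last xs = hd ys"
  shows "walk_cost E c S (xs @ tl ys) = walk_cost E c S xs + walk_cost E c S ys"
proof -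
  obtain xs' where "xs = xs' @ [hd ys]"
    using assms by (metis append_butlast_last_id)
  moreover have "ys = hd ys # tl ys"
    using assms(2) by simp
  ultimately show ?thesis
    using walk_cost_append[of E c S xs' "hd ys" "tl ys"] by simp
qed

lemma contr_dist_le_walk_cost:
  "xs \<noteq> [] \<Longrightarrow> hd xs = u \<Longrightarrow> last xs = v \<Longrightarrow> contr_dist E c S u v \<le> walk_cost E c S xs"
  unfolding contr_dist_def by (rule Inf_lower) blast

lemma contr_dist_self: "contr_dist E c S x x \<le> 0"
  using contr_dist_le_walk_cost[of "[x]" x x E c S] by simp

lemma contr_dist_sym: "contr_dist E c S u v = contr_dist E c S v u"
proof -
  have le: "contr_dist E c S x y \<le> contr_dist E c S y x" for x y
    unfolding contr_dist_def
  proof (rule Inf_mono)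
    fix a assume "a \<in> {walk_cost E c S xs | xs. xs \<noteq> [] \<and> hd xs = y \<and> last xs = x}"
    then obtain xs where "xs \<noteq> []" "hd xs = y" "last xs = x" "a = walk_cost E c S xs"
      by blast
    then show "\<exists>b \<in> {walk_cost E c S xs | xs. xs \<noteq> [] \<and> hd xs = x \<and> last xs = y}. b \<le> a"
      by (intro bexI[of _ a] CollectI exI[of _ "rev xs"]) (simp_all add: hd_rev last_rev walk_cost_rev)
  qed
  show ?thesis
    using le[of u v] le[of v u] by (rule antisym)
qed

lemma contr_dist_antimono:
  assumes "\<forall>e\<in>E. c e \<ge> 0" and "S \<subseteq> S'"
  shows "contr_dist E c S' u v \<le> contr_dist E c S u v"
  unfolding contr_dist_def
proof (rule Inf_mono)
  fix a assume "a \<in> {walk_cost E c S xs | xs. xs \<noteq> [] \<and> hd xs = u \<and> last xs = v}"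
  then obtain xs where "xs \<noteq> []" "hd xs = u" "last xs = v" "a = walk_cost E c S xs"
    by blast
  then show "\<exists>b \<in> {walk_cost E c S' xs | xs. xs \<noteq> [] \<and> hd xs = u \<and> last xs = v}. b \<le> a"
    using walk_cost_antimono[OF assms] by blast
qed

lemma contr_dist_linked:
  assumes "linked S x y"
  shows "contr_dist E c S x y \<le> 0"
proof -
  have "\<exists>xs. xs \<noteq> [] \<and> hd xs = x \<and> last xs = y \<and> walk_cost E c S xs = 0"
    using assms
  proof (induction rule: equivclp_induct)
    case base
    show ?case by (intro exI[of _ "[x]"]) simp
  next
    case (step y z)
    then obtain xs where xs: "xs \<noteq> []" "hd xs = x" "last xs = y" "walk_cost E c S xs = 0"
      by blast
    have "walk_cost E c S [y, z] = 0"
      using step.hyps(2) by (auto simp: step_cost_def)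
    then have "walk_cost E c S (xs @ [z]) = 0"
      using walk_cost_concat[of xs "[y, z]" E c S] xs by simp
    with xs show ?case
      by (intro exI[of _ "xs @ [z]"]) simp
  qed
  then obtain xs where "xs \<noteq> []" "hd xs = x" "last xs = y" "walk_cost E c S xs = 0"
    by blast
  then show ?thesis
    using contr_dist_le_walk_cost[of xs x y E c S] by simp
qed

lemma ereal_le_Inf_add_Inf:
  fixes x :: ereal and A B :: "ereal set"
  assumes le: "\<And>a b. a \<in> A \<Longrightarrow> b \<in> B \<Longrightarrow> x \<le> a + b"
    and A_nonneg: "\<And>a. a \<in> A \<Longrightarrow> 0 \<le> a" and B_nonneg: "\<And>b. b \<in> B \<Longrightarrow> 0 \<le> b"
  shows "x \<le> Inf A + Inf B"
proof -
  have "0 \<le> Inf A" "0 \<le> Inf B"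
    using A_nonneg B_nonneg by (auto intro: Inf_greatest)
  show ?thesis
  proof (cases "A = {} \<or> B = {}")
    case True
    with \<open>0 \<le> Inf A\<close> \<open>0 \<le> Inf B\<close> show ?thesis
      by (auto simp: top_ereal_def)
  next
    case False
    have "x \<le> Inf A + b" if "b \<in> B" for b
    proof -
      have "x \<le> (INF a\<in>A. a + b)"
        using le that by (intro INF_greatest)
      also have "\<dots> = Inf A + b"
        using INF_ereal_add_left[of A b "\<lambda>a. a"] False A_nonneg B_nonneg that by simp
      finally show ?thesis .
    qed
    then have "x \<le> (INF b\<in>B. Inf A + b)"
      by (intro INF_greatest)
    also have "\<dots> = Inf A + Inf B"
      using INF_ereal_add_right[of B "Inf A" "\<lambda>b. b"] False B_nonneg \<open>0 \<le> Inf A\<close> by simp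
    finally show ?thesis .
  qed
qed

lemma contr_dist_triangle:
  assumes "\<forall>e\<in>E. c e \<ge> 0"
  shows "contr_dist E c S x z \<le> contr_dist E c S x y + contr_dist E c S y z"
  unfolding contr_dist_def[of E c S x y] contr_dist_def[of E c S y z]
proof (rule ereal_le_Inf_add_Inf)
  fix a b
  assume "a \<in> {walk_cost E c S xs | xs. xs \<noteq> [] \<and> hd xs = x \<and> last xs = y}"
    and "b \<in> {walk_cost E c S ys | ys. ys \<noteq> [] \<and> hd ys = y \<and> last ys = z}"
  then obtain xs ys where xs: "xs \<noteq> []" "hd xs = x" "last xs = y" "a = walk_cost E c S xs"
    and ys: "ys \<noteq> []" "hd ys = y" "last ys = z" "b = walk_cost E c S ys"
    by blast
  have "last (xs @ tl ys) = z"
    using xs ys by (cases ys) auto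
  then have "contr_dist E c S x z \<le> walk_cost E c S (xs @ tl ys)"
    using xs by (intro contr_dist_le_walk_cost) simp_all
  also have "\<dots> = a + b"
    using xs ys by (simp add: walk_cost_concat)
  finally show "contr_dist E c S x z \<le> a + b" .
qed (use walk_cost_nonneg[OF assms] in auto)

lemma contr_dist_le_through_linked:
  assumes nonneg: "\<forall>e\<in>E. c e \<ge> 0" and "linked S p q"
  shows "contr_dist E c S s t \<le> contr_dist E c {} s p + contr_dist E c {} t q"
proof -
  have "contr_dist E c S s t \<le> contr_dist E c S s p + contr_dist E c S p t"
    by (rule contr_dist_triangle[OF nonneg])
  also have "\<dots> \<le> contr_dist E c S s p + (contr_dist E c S p q + contr_dist E c S q t)"
    by (intro add_left_mono contr_dist_triangle[OF nonneg])
  also have "\<dots> \<le> contr_dist E c {} s p + (0 + contr_dist E c {} q t)"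
    by (intro add_mono contr_dist_antimono[OF nonneg] contr_dist_linked[OF \<open>linked S p q\<close>])
      simp_all
  finally show ?thesis
    by (simp add: contr_dist_sym[of E c "{}" q t])
qed

section \<open>The loop invariant\<close>

lemma card_image_Un_of_card_le_1:
  assumes "finite A" "finite B" "card A \<le> 1" "card B \<le> 1"
    and distinct: "\<forall>a\<in>A. \<forall>b\<in>B. f a \<noteq> f b"
  shows "card (f ` (A \<union> B)) = card A + card B"
proof -
  have "inj_on f A" "inj_on f B"
    using assms(1-4) by (auto simp: card_le_Suc0_iff_eq intro: inj_onI)
  moreover have "f ` A \<inter> f ` B = {}"
    using distinct by blast
  ultimately show ?thesis
    using assms(1,2) by (simp add: image_Un card_Un_disjoint card_image)
qed

lemma card_le_of_subset_Un_Times: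
  assumes "finite A" "finite P" "finite Q" and "B \<subseteq> A \<union> {s} \<times> P \<union> {t} \<times> Q"
  shows "card B \<le> card A + (card P + card Q)"
proof -
  have "card B \<le> card (A \<union> {s} \<times> P \<union> {t} \<times> Q)"
    using assms by (intro card_mono) auto
  also have "\<dots> \<le> card A + card ({s} \<times> P) + card ({t} \<times> Q)"
    by (meson card_Un_le add_right_mono order_trans)
  finally show ?thesis
    by (simp add: card_cartesian_product_singleton)
qed

text \<open>\<open>P\<close> is the partner of \<open>x\<close>: the vertex of \<open>W\<close> it is paired with, or \<open>x\<close> itself if it
  already lies in \<open>W\<close>; it is empty if \<open>x\<close> is a new vertex of \<open>W\<close>.\<close>

lemma handle_terminal_effect:
  assumes step: "handle_terminal E c r x (Sf, W) (Sf', W')" and "0 \<le> r" and "finite W"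
  obtains P where "P \<subseteq> W" "card P \<le> 1" "card W' + card P = card W + 1"
    "W \<subseteq> W'" "W' \<subseteq> insert x W" "Sf \<subseteq> Sf'" "Sf' \<subseteq> Sf \<union> {x} \<times> P"
    "\<forall>p\<in>P. contr_dist E c {} x p \<le> ereal r \<and> (p = x \<or> (x, p) \<in> Sf')"
proof -
  consider (close) w where "w \<in> W" "contr_dist E c {} x w < ereal r"
      "Sf' = insert (x, w) Sf" "W' = W"
    | (new) "Sf' = Sf" "W' = insert x W"
    using step unfolding handle_terminal_def by auto
  then show ?thesis
  proof cases
    case close
    then show ?thesis
      by (intro that[of "{w}"]) auto
  next
    case new
    show ?thesis
    proof (cases "x \<in> W")
      case True
      have "contr_dist E c {} x x \<le> ereal r"
        using contr_dist_self[of E c "{}" x] \<open>0 \<le> r\<close> by (simp add: order_trans)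
      with True new show ?thesis
        by (intro that[of "{x}"]) (auto simp: insert_absorb)
    next
      case False
      with new \<open>finite W\<close> show ?thesis
        by (intro that[of "{}"]) auto
    qed
  qed
qed

lemma unlinked_if_near_far_pair:
  assumes nonneg: "\<forall>e\<in>E. c e \<ge> 0" and "2 * r \<le> rho"
    and far: "ereal rho < contr_dist E c S s t"
    and near: "contr_dist E c {} s p \<le> ereal r" "contr_dist E c {} t q \<le> ereal r"
  shows "\<not> linked S p q"
proof
  assume "linked S p q"
  then have "contr_dist E c S s t \<le> contr_dist E c {} s p + contr_dist E c {} t q"
    by (rule contr_dist_le_through_linked[OF nonneg])
  also have "\<dots> \<le> ereal r + ereal r"
    using near by (rule add_mono)
  also have "\<dots> \<le> ereal rho"
    using \<open>2 * r \<le> rho\<close> by simp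
  finally show False
    using far by simp
qed

lemma card_components_join:
  assumes "H \<subseteq> H'" "H' \<subseteq> insert (s, t) H \<union> {s} \<times> Ps \<union> {t} \<times> Pt" "(s, t) \<in> H'"
    and "W \<subseteq> W'" "W' \<subseteq> insert s (insert t W)" "finite W'" "Ps \<union> Pt \<subseteq> W"
    and Ps: "\<forall>p\<in>Ps. p = s \<or> (s, p) \<in> H'" and Pt: "\<forall>p\<in>Pt. p = t \<or> (t, p) \<in> H'"
  shows "card (component H' ` W') + card (component H ` (Ps \<union> Pt)) \<le> card (component H ` W) + 1"
proof (rule card_components_merge[where s = s])
  have "linked H' t s"
    using \<open>(s, t) \<in> H'\<close> by blast
  then have to_s: "linked H' p s" if "p = s \<or> p = t" for p
    using that by auto
  show "\<forall>(a, b) \<in> H' - H. linked H' a s"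
    using assms(2) to_s by blast
  show "\<forall>x \<in> W' - W. linked H' x s"
    using assms(5) to_s by blast
  show "\<forall>x \<in> Ps \<union> Pt. linked H' x s"
  proof
    fix p assume "p \<in> Ps \<union> Pt"
    then consider "p \<in> Ps" | "p \<in> Pt" by blast
    then show "linked H' p s"
    proof cases
      case 1
      with Ps to_s show ?thesis by blast
    next
      case 2
      with Pt to_s \<open>linked H' t s\<close> show ?thesis by (blast intro: equivclp_trans)
    qed
  qed
qed (use assms in auto)

lemma loop_step_partners:
  assumes nonneg: "\<forall>e\<in>E. c e \<ge> 0" and "0 \<le> r" and "2 * r \<le> rho" and "finite W"
    and step: "loop_step E c U rho r (Sr, Sf, W) (Sr', Sf', W')"
  obtains s t Ps Pt where "Sr' = insert (s, t) Sr" "(s, t) \<notin> Sr"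
    "Ps \<subseteq> W" "Pt \<subseteq> W" "card Ps \<le> 1" "card Pt \<le> 1" "card W' + card Ps + card Pt = card W + 2"
    "W \<subseteq> W'" "W' \<subseteq> insert s (insert t W)" "Sf \<subseteq> Sf'" "Sf' \<subseteq> Sf \<union> {s} \<times> Ps \<union> {t} \<times> Pt"
    "\<forall>p\<in>Ps. p = s \<or> (s, p) \<in> Sf'" "\<forall>p\<in>Pt. p = t \<or> (t, p) \<in> Sf'"
    "\<forall>p\<in>Ps. \<forall>q\<in>Pt. \<not> linked (Sr \<union> Sf) p q"
proof -
  obtain s t Sf1 W1 where far: "ereal rho < contr_dist E c (Sr \<union> Sf) s t"
    and h1: "handle_terminal E c r s (Sf, W) (Sf1, W1)"
    and h2: "handle_terminal E c r t (Sf1, W1) (Sf', W')"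
    and Sr': "Sr' = insert (s, t) Sr"
    using step unfolding loop_step_def by auto
  obtain Ps where Ps: "Ps \<subseteq> W" "card Ps \<le> 1" "card W1 + card Ps = card W + 1"
    "W \<subseteq> W1" "W1 \<subseteq> insert s W" "Sf \<subseteq> Sf1" "Sf1 \<subseteq> Sf \<union> {s} \<times> Ps"
    "\<forall>p\<in>Ps. contr_dist E c {} s p \<le> ereal r \<and> (p = s \<or> (s, p) \<in> Sf1)"
    using handle_terminal_effect[OF h1 \<open>0 \<le> r\<close> \<open>finite W\<close>] by blast
  have "finite W1"
    using Ps(5) \<open>finite W\<close> by (simp add: finite_subset)
  obtain Pt where Pt: "Pt \<subseteq> W1" "card Pt \<le> 1" "card W' + card Pt = card W1 + 1"
    "W1 \<subseteq> W'" "W' \<subseteq> insert t W1" "Sf1 \<subseteq> Sf'" "Sf' \<subseteq> Sf1 \<union> {t} \<times> Pt"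
    "\<forall>p\<in>Pt. contr_dist E c {} t p \<le> ereal r \<and> (p = t \<or> (t, p) \<in> Sf')"
    using handle_terminal_effect[OF h2 \<open>0 \<le> r\<close> \<open>finite W1\<close>] by blast
  note unlinked = unlinked_if_near_far_pair[OF nonneg \<open>2 * r \<le> rho\<close> far]
  have near_self: "contr_dist E c {} x x \<le> ereal r" for x
    using contr_dist_self[of E c "{}" x] \<open>0 \<le> r\<close> order_trans by fastforce
  have "(s, t) \<notin> Sr"
    using unlinked[OF near_self near_self] by blast
  have "s \<notin> Pt"
    using unlinked[OF near_self, of s] Pt(8) by auto
  then have "Pt \<subseteq> W"
    using Pt(1) Ps(5) by blast
  show ?thesis
  proof (rule that[OF Sr' \<open>(s, t) \<notin> Sr\<close> Ps(1) \<open>Pt \<subseteq> W\<close> Ps(2) Pt(2)])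
    show "\<forall>p\<in>Ps. \<forall>q\<in>Pt. \<not> linked (Sr \<union> Sf) p q"
      using unlinked Ps(8) Pt(8) by blast
  qed (use Ps Pt in auto)
qed

lemma loop_step_counts:
  assumes "\<forall>e\<in>E. c e \<ge> 0" and "0 \<le> r" and "2 * r \<le> rho"
    and fin: "finite Sr" "finite Sf" "finite W"
    and "loop_step E c U rho r (Sr, Sf, W) (Sr', Sf', W')"
  obtains m where "finite Sr'" "finite Sf'" "finite W'"
    "card Sr' = card Sr + 1" "card W' + m = card W + 2" "card Sf' \<le> card Sf + m"
    "card (component (Sr' \<union> Sf') ` W') + m \<le> card (component (Sr \<union> Sf) ` W) + 1"
proof -
  obtain s t Ps Pt where Sr': "Sr' = insert (s, t) Sr" "(s, t) \<notin> Sr"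
    and P: "Ps \<subseteq> W" "Pt \<subseteq> W" "card Ps \<le> 1" "card Pt \<le> 1"
    and W': "card W' + card Ps + card Pt = card W + 2" "W \<subseteq> W'" "W' \<subseteq> insert s (insert t W)"
    and Sf': "Sf \<subseteq> Sf'" "Sf' \<subseteq> Sf \<union> {s} \<times> Ps \<union> {t} \<times> Pt"
    and partner: "\<forall>p\<in>Ps. p = s \<or> (s, p) \<in> Sf'" "\<forall>p\<in>Pt. p = t \<or> (t, p) \<in> Sf'"
    and unlinked: "\<forall>p\<in>Ps. \<forall>q\<in>Pt. \<not> linked (Sr \<union> Sf) p q"
    using loop_step_partners[OF assms(1-3) fin(3) assms(7)] by blast
  have "finite Ps" "finite Pt" "finite W'"
    using P W'(3) fin(3) by (auto intro: finite_subset)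
  have "card (component (Sr \<union> Sf) ` (Ps \<union> Pt)) = card Ps + card Pt"
    using \<open>finite Ps\<close> \<open>finite Pt\<close> P(3,4) unlinked
    by (intro card_image_Un_of_card_le_1) (simp_all add: component_eq_iff)
  moreover have "card (component (Sr' \<union> Sf') ` W') + card (component (Sr \<union> Sf) ` (Ps \<union> Pt))
      \<le> card (component (Sr \<union> Sf) ` W) + 1"
    by (rule card_components_join[where s = s and t = t])
      (use Sr' P W' Sf' partner \<open>finite W'\<close> in auto)
  ultimately show ?thesis
    using Sr' fin W'(1) \<open>finite W'\<close> finite_subset[OF Sf'(2)] \<open>finite Ps\<close> \<open>finite Pt\<close>
      card_le_of_subset_Un_Times[OF fin(2) \<open>finite Ps\<close> \<open>finite Pt\<close> Sf'(2)]
    by (intro that[of "card Ps + card Pt"]) simp_all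
qed

definition loop_invariant :: "('a \<times> 'a) set \<times> ('a \<times> 'a) set \<times> 'a set \<Rightarrow> bool" where
  "loop_invariant = (\<lambda>(Sr, Sf, W). finite Sr \<and> finite Sf \<and> finite W \<and>
     card Sr + card (component (Sr \<union> Sf) ` W) \<le> card W \<and>
     card Sf + card (component (Sr \<union> Sf) ` W) \<le> card Sr)"

lemma loop_invariant_step:
  assumes nonneg: "\<forall>e\<in>E. c e \<ge> 0" and "0 \<le> r" and "2 * r \<le> rho"
    and step: "loop_step E c U rho r st st'" and inv: "loop_invariant st"
  shows "loop_invariant st'"
proof -
  obtain Sr Sf W Sr' Sf' W' where st: "st = (Sr, Sf, W)" and st': "st' = (Sr', Sf', W')"
    by (cases st, cases st') auto
  have "finite Sr" "finite Sf" "finite W"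
    using inv unfolding st loop_invariant_def by auto
  with nonneg \<open>0 \<le> r\<close> \<open>2 * r \<le> rho\<close> obtain m where "finite Sr'" "finite Sf'" "finite W'"
    "card Sr' = card Sr + 1" "card W' + m = card W + 2" "card Sf' \<le> card Sf + m"
    "card (component (Sr' \<union> Sf') ` W') + m \<le> card (component (Sr \<union> Sf) ` W) + 1"
    using step unfolding st st' by (rule loop_step_counts)
  with inv show ?thesis
    unfolding st st' loop_invariant_def by auto
qed

lemma loop_invariant_reachable:
  assumes "\<forall>e\<in>E. c e \<ge> 0" and "0 \<le> r" and "2 * r \<le> rho"
    and "(loop_step E c U rho r)\<^sup>*\<^sup>* ({}, {}, {}) st"
  shows "loop_invariant st"
  using assms(4)
proof (induction rule: rtranclp_induct)
  case base
  show ?case by (simp add: loop_invariant_def)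
next
  case (step st st')
  show ?case
    by (rule loop_invariant_step[OF assms(1-3) step.hyps(2) step.IH])
qed

theorem mainTheorem15:
  fixes V :: "'a set" and E :: "'a set set" and c :: "'a set \<Rightarrow> real"
    and U :: "('a \<times> 'a) set" and k :: nat and T \<beta> \<gamma> :: real
    and Sr Sf :: "('a \<times> 'a) set" and W :: "'a set"
  assumes "finite V"
    and "\<forall>e\<in>E. e \<subseteq> V \<and> card e = 2"
    and "\<forall>e\<in>E. c e \<ge> 0"
    and "U \<subseteq> V \<times> V"
    and "k > 0"
    and "T \<ge> 0" and "\<beta> > 0" and "\<gamma> > 0" and "\<gamma> \<le> \<beta> / 2"
    and "(loop_step E c U (\<beta> * T / real k) (\<gamma> * T / real k))\<^sup>*\<^sup>* ({}, {}, {}) (Sr, Sf, W)"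
    and "loop_terminated E c U (\<beta> * T / real k) (Sr, Sf, W)"
  shows "card W \<ge> card Sr \<and> card Sr \<ge> card Sf"
proof -
  \<comment> \<open>The bounds hold in every reachable state.\<close>
  have "0 \<le> \<gamma> * T / real k"
    using assms(6,8) by simp
  moreover have "2 * (\<gamma> * T / real k) \<le> \<beta> * T / real k"
    using assms(5,6,9) by (simp add: divide_right_mono mult_right_mono mult.assoc[symmetric])
  ultimately have "loop_invariant (Sr, Sf, W)"
    using loop_invariant_reachable[OF assms(3) _ _ assms(10)] by blast
  then show ?thesis
    unfolding loop_invariant_def by auto
qed

end
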